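(* Let $F:[0,1]^n\to\mathbb{R}$ be differentiable and $\epsilon>0$ be such that for all $x,y\in[0,1]^n$ with $x-y\in\mathbb{R}^n_{+}\cup\mathbb{R}^n_{-}$, $F(y)\le F(x)+\nabla F(x)^\top(y-x)+\epsilon$. Then $F$ is $\epsilon$-up-concave.
   Context: $F:[0,1]^n\to\mathbb{R}$ is $\epsilon$-up-concave ($\epsilon\ge0$) if for every $u\in\mathbb{R}^n_{+}$, $x\in[0,1]^n$, the function $G_{x,u}(t)=F(tu+x)$ satisfies $G_{x,u}(\lambda t_1+(1-\lambda)t_2)\ge\lambda G_{x,u}(t_1)+(1-\lambda)G_{x,u}(t_2)-\epsilon$ for all $\lambda\in[0,1]$ and $t_1,t_2\in\mathbb{R}$ such that $t_1u+x$, $t_2u+x$, and $x+\lambda t_1u+(1-\lambda)t_2u$ lie in $[0,1]^n$. *)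

theory Defs
  imports "HOL-Analysis.Analysis"
begin

definition unit_cube :: "(real ^ 'n) set" where
  "unit_cube = {x. \<forall>i. 0 \<le> x $ i \<and> x $ i \<le> 1}"

definition nonneg_orthant :: "(real ^ 'n) set" where
  "nonneg_orthant = {x. \<forall>i. 0 \<le> x $ i}"

definition eps_up_concave :: "real \<Rightarrow> (real ^ 'n \<Rightarrow> real) \<Rightarrow> bool" where
  "eps_up_concave eps F \<longleftrightarrow>
     (\<forall>u \<in> nonneg_orthant. \<forall>x \<in> unit_cube. \<forall>lam t1 t2.
        0 \<le> lam \<and> lam \<le> 1 \<and>
        t1 *\<^sub>R u + x \<in> unit_cube \<and> t2 *\<^sub>R u + x \<in> unit_cube \<and>
        x + (lam * t1 + (1 - lam) * t2) *\<^sub>R u \<in> unit_cube \<longrightarrow>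
        F ((lam * t1 + (1 - lam) * t2) *\<^sub>R u + x)
          \<ge> lam * F (t1 *\<^sub>R u + x) + (1 - lam) * F (t2 *\<^sub>R u + x) - eps)"

end

theory Submission
  imports Defs
begin

text \<open>Along a line \<open>t \<mapsto> t u + x\<close> with \<open>u \<ge> 0\<close> any two points are comparable coordinatewise,
  so the hypothesis may be applied at the point \<open>z\<close> of the line corresponding to the convex
  combination of \<open>t\<^sub>1\<close> and \<open>t\<^sub>2\<close>. Averaging the two bounds for \<open>F(t\<^sub>1 u + x)\<close> and
  \<open>F(t\<^sub>2 u + x)\<close> with weights \<open>\<lambda>\<close> and \<open>1 - \<lambda>\<close>, the gradient terms cancel, leaving
  \<open>\<lambda> F(t\<^sub>1 u + x) + (1 - \<lambda>) F(t\<^sub>2 u + x) \<le> F(z) + \<epsilon>\<close>.\<close>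

lemma scaleR_nonneg_orthant_comparable:
  fixes u :: "real ^ 'n"
  assumes "u \<in> nonneg_orthant"
  shows "c *\<^sub>R u \<in> nonneg_orthant \<union> uminus ` nonneg_orthant"
proof (cases "c \<ge> 0")
  case True
  then show ?thesis using assms by (auto simp: nonneg_orthant_def)
next
  case False
  then have "(- c) *\<^sub>R u \<in> nonneg_orthant"
    using assms by (auto simp: nonneg_orthant_def mult_nonpos_nonneg)
  moreover have "c *\<^sub>R u = - ((- c) *\<^sub>R u)" by simp
  ultimately show ?thesis by blast
qed

lemma line_points_comparable:
  fixes u x :: "real ^ 'n"
  assumes "u \<in> nonneg_orthant"
  shows "(s *\<^sub>R u + x) - (t *\<^sub>R u + x) \<in> nonneg_orthant \<union> uminus ` nonneg_orthant"
  using scaleR_nonneg_orthant_comparable[OF assms, of "s - t"]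
  by (simp add: scaleR_diff_left)

lemma convex_combination_le_of_tangent_bounds:
  fixes g y1 y2 z :: "'a::real_inner"
  assumes "0 \<le> lam" "lam \<le> 1"
    and z: "z = lam *\<^sub>R y1 + (1 - lam) *\<^sub>R y2"
    and "F y1 \<le> F z + g \<bullet> (y1 - z) + eps"
    and "F y2 \<le> F z + g \<bullet> (y2 - z) + eps"
  shows "lam * F y1 + (1 - lam) * F y2 \<le> F z + eps"
proof -
  have "lam *\<^sub>R (y1 - z) + (1 - lam) *\<^sub>R (y2 - z) = 0"
    by (simp add: z algebra_simps)
  then have cancel: "lam * (g \<bullet> (y1 - z)) + (1 - lam) * (g \<bullet> (y2 - z)) = 0"
    by (metis inner_add_right inner_scaleR_right inner_zero_right)
  have "lam * F y1 + (1 - lam) * F y2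
      \<le> lam * (F z + g \<bullet> (y1 - z) + eps) + (1 - lam) * (F z + g \<bullet> (y2 - z) + eps)"
    using assms by (intro add_mono mult_left_mono) auto
  also have "\<dots> = F z + eps"
    using cancel by (simp add: algebra_simps)
  finally show ?thesis .
qed

theorem mainTheorem6:
  fixes F :: "real ^ 'n \<Rightarrow> real"
    and gradF :: "real ^ 'n \<Rightarrow> real ^ 'n"
    and eps :: real
  assumes diff: "\<And>x. x \<in> unit_cube \<Longrightarrow>
                   (F has_derivative (\<lambda>h. gradF x \<bullet> h)) (at x within unit_cube)"
    and eps_pos: "eps > 0"
    and ineq: "\<And>x y. x \<in> unit_cube \<Longrightarrow> y \<in> unit_cube \<Longrightarrow>
                 x - y \<in> nonneg_orthant \<union> uminus ` nonneg_orthant \<Longrightarrow>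
                 F y \<le> F x + gradF x \<bullet> (y - x) + eps"
  shows "eps_up_concave eps F"
  unfolding eps_up_concave_def
proof (intro ballI allI impI, elim conjE)
  fix u x :: "real ^ 'n" and lam t1 t2 :: real
  assume u: "u \<in> nonneg_orthant" and lam: "0 \<le> lam" "lam \<le> 1"
    and y1: "t1 *\<^sub>R u + x \<in> unit_cube" and y2: "t2 *\<^sub>R u + x \<in> unit_cube"
    and "x + (lam * t1 + (1 - lam) * t2) *\<^sub>R u \<in> unit_cube"
  then have z: "(lam * t1 + (1 - lam) * t2) *\<^sub>R u + x \<in> unit_cube"
    by (simp add: add.commute)
  have "(lam * t1 + (1 - lam) * t2) *\<^sub>R u + x
      = lam *\<^sub>R (t1 *\<^sub>R u + x) + (1 - lam) *\<^sub>R (t2 *\<^sub>R u + x)"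
    by (simp add: algebra_simps)
  from convex_combination_le_of_tangent_bounds[OF lam this]
  show "lam * F (t1 *\<^sub>R u + x) + (1 - lam) * F (t2 *\<^sub>R u + x) - eps
      \<le> F ((lam * t1 + (1 - lam) * t2) *\<^sub>R u + x)"
    using ineq[OF z y1] ineq[OF z y2] line_points_comparable[OF u] by fastforce
qed

end
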